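(* Let $a\in(-2,0)$, $r(x)=ax/(1+x)$ for $x>-1$, $A_a(m)=m+r(m)+\frac{1}{r(m)}\int_m^0 r(s)\,ds$, and let $m\in(-1,0)$ and $M>0$ with $M\le A_a(m)$. Then $$\beta_-:=\frac{1}{2a}+\frac{m}{r(M)}>0.$$ *)

theory Defs
  imports "HOL-Analysis.Analysis"
begin

definition r_fun :: "real \<Rightarrow> real \<Rightarrow> real" where
  "r_fun a x = a * x / (1 + x)"

text \<open>A_a(m) = m + r(m) + (1/r(m)) * integral from m to 0 of r(s) ds (m < 0, so m..0 is the
  natural orientation).\<close>
definition A_fun :: "real \<Rightarrow> real \<Rightarrow> real" where
  "A_fun a m = m + r_fun a m + (1 / r_fun a m) * integral {m..0} (\<lambda>s. r_fun a s)"

end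

theory Submission
  imports Defs
begin

text \<open>For a < 0 the function r is convex on (-1, 0], so on [m, 0] it lies below its chord
  s \<mapsto> r(m) s / m. Integrating the chord gives A_a(m) \<le> m/2 + r(m) < -2m/(1+m), the last
  step because a > -2. Hence M(1 + m) < -2m, so M + 2m(1 + M) < M m < 0, and this is the
  numerator of \<beta> = (M + 2m(1 + M)) / (2aM), whose denominator is negative as well.\<close>

lemma r_fun_le_chord:
  fixes a m s :: real
  assumes "a \<le> 0" and "-1 < m" and "m \<le> s" and "s \<le> 0"
  shows "r_fun a s \<le> a / (1 + m) * s"
proof -
  have "s / (1 + m) \<le> s / (1 + s)"
    using assms by (intro divide_left_mono_neg) auto
  then have "a * (s / (1 + s)) \<le> a * (s / (1 + m))"
    using assms by (intro mult_left_mono_neg)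
  then show ?thesis
    unfolding r_fun_def by simp
qed

lemma integral_r_fun_le:
  fixes a m :: real
  assumes "a \<le> 0" and "-1 < m" and "m \<le> 0"
  shows "integral {m..0} (r_fun a) \<le> - (a / (1 + m)) * m\<^sup>2 / 2"
proof -
  have chord: "((\<lambda>s. a / (1 + m) * s) has_integral (a / (1 + m) * ((0\<^sup>2 - m\<^sup>2) / 2))) {m..0}"
    using assms by (intro has_integral_mult_right ident_has_integral)
  have "continuous_on {m..0} (r_fun a)"
    unfolding r_fun_def using assms by (intro continuous_intros) auto
  then have "r_fun a integrable_on {m..0}"
    by (rule integrable_continuous_interval)
  then have "integral {m..0} (r_fun a) \<le> a / (1 + m) * ((0\<^sup>2 - m\<^sup>2) / 2)"
    by (rule has_integral_le[OF integrable_integral chord]) (use assms r_fun_le_chord in auto)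
  then show ?thesis
    by simp
qed

lemma A_fun_le:
  fixes a m :: real
  assumes "a < 0" and "-1 < m" and "m < 0"
  shows "A_fun a m \<le> m / 2 + r_fun a m"
proof -
  have rm: "r_fun a m = a / (1 + m) * m"
    unfolding r_fun_def by simp
  have rm_pos: "r_fun a m > 0"
    unfolding rm using assms by (intro mult_neg_neg divide_neg_pos) auto
  have "integral {m..0} (r_fun a) \<le> - r_fun a m * m / 2"
    using integral_r_fun_le[of a m] assms by (simp add: rm power2_eq_square)
  then have "(1 / r_fun a m) * integral {m..0} (r_fun a) \<le> (1 / r_fun a m) * (- r_fun a m * m / 2)"
    using rm_pos by (intro mult_left_mono) auto
  also have "\<dots> = - m / 2"
    using rm_pos by simp
  finally have "(1 / r_fun a m) * integral {m..0} (r_fun a) \<le> - m / 2" .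
  then show ?thesis
    unfolding A_fun_def by linarith
qed

lemma A_fun_less:
  fixes a m :: real
  assumes "-2 < a" and "a < 0" and "-1 < m" and "m < 0"
  shows "A_fun a m < -2 * m / (1 + m)"
proof -
  have "r_fun a m < -2 * m / (1 + m)"
    unfolding r_fun_def using assms
    by (intro divide_strict_right_mono) (use mult_strict_right_mono_neg[of "-2" a m] in auto)
  then show ?thesis
    using A_fun_le[of a m] assms by linarith
qed

lemma beta_minus_eq:
  fixes a M m :: real
  assumes "a \<noteq> 0" and "0 < M"
  shows "1 / (2 * a) + m / r_fun a M = (M + 2 * m * (1 + M)) / (2 * a * M)"
  unfolding r_fun_def using assms by (simp add: field_simps)

theorem lemma4p1:
  fixes a m M :: real
  assumes "-2 < a" and "a < 0"
    and "-1 < m" and "m < 0"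
    and "0 < M" and "M \<le> A_fun a m"
  shows "1 / (2 * a) + m / r_fun a M > 0"
proof -
  have "M < -2 * m / (1 + m)"
    using A_fun_less assms by (meson le_less_trans)
  then have "M * (1 + m) < -2 * m"
    using assms by (simp add: field_simps)
  moreover have "M * m < 0"
    using assms by (simp add: mult_pos_neg)
  ultimately have "M + 2 * m * (1 + M) < 0"
    by (simp add: algebra_simps)
  then have "(M + 2 * m * (1 + M)) / (2 * a * M) > 0"
    using assms by (intro divide_neg_neg) (auto simp: mult_neg_pos)
  then show ?thesis
    using assms by (simp add: beta_minus_eq)
qed

end
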